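(* Let $\vec{\mathbf{e}}=(1,0)$, $\vec{\mathbf{f}}=(0,1)$. Let $E,E'$ be two copies of the flat plane $\mathbb{R}^2$. Let $\mathcal{S}$ be the family of marks on $E$ with endpoints $4n\vec{\mathbf{e}},(4n+1)\vec{\mathbf{e}}$ ($n\ge1$), $\mathcal{S}_{\mathrm{glue}}$ the family of marks on $E$ with endpoints $(4n+2)\vec{\mathbf{e}},(4n+3)\vec{\mathbf{e}}$ ($n\ge1$), $\mathcal{S}'$ the family of marks on $E'$ with endpoints $2n\vec{\mathbf{f}},2n\vec{\mathbf{f}}+\vec{\mathbf{e}}$ ($n\ge1$), and $\mathcal{S}'_{\mathrm{glue}}$ the family of marks on $E'$ with endpoints $(2n+1)\vec{\mathbf{f}},(2n+1)\vec{\mathbf{f}}+\vec{\mathbf{e}}$ ($n\ge 1$). Let $\hat{E}$ be the flat surface obtained from $E\sqcup E'$ by regluing along $\mathcal{S}_{\mathrm{glue}}$ and $\mathcal{S}'_{\mathrm{glue}}$; the families $\mathcal{S},\mathcal{S}'$ are inherited by $\hat{E}$. Let $g\in\mathbf{GL}_+(2,\mathbb{R})$ with $\|g\|\ge 1$, and let $\hat{E}_g$ be the surface obtained from $\hat{E}$ by post-composing every chart with $g$, with $\bar g:\hat E\to\hat E_g$ the canonical affine homeomorphism of derivative $g$. Then the distance in $\hat{E}_g$ between $\bar g(\bigcup\mathcal{S})$ and $\bar g(\bigcup\mathcal{S}')$ is at least $\frac{1}{\sqrt{2}}$.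
   Context: $\|g\|$ is the operator norm with respect to the Euclidean norm. A flat surface is a connected Riemann surface with a non-zero holomorphic $1$-form, carrying the induced translation atlas and flat metric. A mark is an oriented finite-length geodesic segment (with endpoints) avoiding singularities; in the plane it is determined by its endpoints, and its slope is its holonomy vector. Regluing along two disjoint marks $m,m'$ of equal slope: cut along $m$ and $m'$, obtaining four boundary segments, and reglue each side of the cut along $m$ to the opposite side of the cut along $m'$ by translation. For two sequences $(m_n),(m'_n)$ of disjoint non-accumulating marks with $m_n,m'_n$ of equal slope, regluing along them means regluing successively along $m_n,m'_n$ for all $n$ (in the limit). Marks disjoint from those used in a regluing are inherited by the resulting surface. Distances are measured in the flat (path) metric. *)

theory Defs
  imports "HOL-Analysis.Analysis"
begin

datatype sheet = SE | SE'

fun other :: "sheet \<Rightarrow> sheet" where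
  "other SE = SE'" | "other SE' = SE"

definition pt :: "real \<Rightarrow> real \<Rightarrow> real^2" where
  "pt a b = vector [a, b]"

definition glue_start :: "sheet \<Rightarrow> nat \<Rightarrow> real^2" where
  "glue_start s n = (case s of SE \<Rightarrow> pt (4 * real n + 2) 0 | SE' \<Rightarrow> pt 0 (2 * real n + 1))"

definition glue_end :: "sheet \<Rightarrow> nat \<Rightarrow> real^2" where
  "glue_end s n = (case s of SE \<Rightarrow> pt (4 * real n + 3) 0 | SE' \<Rightarrow> pt 1 (2 * real n + 1))"

definition glue_height :: "sheet \<Rightarrow> nat \<Rightarrow> real" where
  "glue_height s n = (case s of SE \<Rightarrow> 0 | SE' \<Rightarrow> 2 * real n + 1)"

definition glue_slit :: "sheet \<Rightarrow> nat \<Rightarrow> (real^2) set" where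
  "glue_slit s n = closed_segment (glue_start s n) (glue_end s n)"

definition glue_slit_open :: "sheet \<Rightarrow> nat \<Rightarrow> (real^2) set" where
  "glue_slit_open s n = open_segment (glue_start s n) (glue_end s n)"

text \<open>The translation identifying the n-th glue mark on sheet s with the one on the other sheet.\<close>
definition transfer :: "sheet \<Rightarrow> nat \<Rightarrow> real^2 \<Rightarrow> real^2" where
  "transfer s n p = p - glue_start s n + glue_start (other s) n"

text \<open>A piece of polygonal path: a straight segment from a to b in sheet s,
  of positive length, whose interior does not meet any (closed) glue mark.\<close>
type_synonym piece = "sheet \<times> (real^2) \<times> (real^2)"

definition piece_ok :: "piece \<Rightarrow> bool" where
  "piece_ok c = (let s = fst c; a = fst (snd c); b = snd (snd c) in
      a \<noteq> b \<and> (\<forall>n\<ge>1. open_segment a b \<inter> glue_slit s n = {}))"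

text \<open>How consecutive pieces may be joined in the reglued surface.
  At an endpoint of a glue mark (a cone point): stay, or pass to the identified endpoint
  on the other sheet.
  At an interior point of a glue mark approached from one side: either continue on the same
  side in the same sheet, or cross: the side of the cut along m is glued to the opposite side
  of the cut along m', so one leaves on the opposite side of the partner mark.\<close>
definition link :: "piece \<Rightarrow> piece \<Rightarrow> bool" where
  "link c c' = (let s = fst c; a = fst (snd c); b = snd (snd c);
                    s' = fst c'; a' = fst (snd c'); b' = snd (snd c') in
      ((\<forall>n\<ge>1. b \<notin> glue_slit s n) \<and> s' = s \<and> a' = b)
    \<or> (\<exists>n\<ge>1. b \<in> {glue_start s n, glue_end s n} \<and>
          ((s' = s \<and> a' = b) \<or> (s' = other s \<and> a' = transfer s n b)))
    \<or> (\<exists>n\<ge>1. b \<in> glue_slit_open s n \<and>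
          ((s' = s \<and> a' = b \<and> sgn (b' $ 2 - glue_height s n) = sgn (a $ 2 - glue_height s n))
         \<or> (s' = other s \<and> a' = transfer s n b \<and>
              sgn (b' $ 2 - glue_height s' n) = - sgn (a $ 2 - glue_height s n)))))"

definition admissible :: "piece list \<Rightarrow> sheet \<times> (real^2) \<Rightarrow> sheet \<times> (real^2) \<Rightarrow> bool" where
  "admissible cs x y =
     (cs \<noteq> [] \<and> (\<forall>c\<in>set cs. piece_ok c) \<and>
      (\<forall>i. Suc i < length cs \<longrightarrow> link (cs ! i) (cs ! Suc i)) \<and>
      fst (hd cs) = fst x \<and> fst (snd (hd cs)) = snd x \<and>
      fst (last cs) = fst y \<and> snd (snd (last cs)) = snd y)"

text \<open>Length in the flat metric of \<open>\<hat>E_g\<close> (charts post-composed with g).\<close>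
definition path_len_g :: "real^2^2 \<Rightarrow> piece list \<Rightarrow> real" where
  "path_len_g g cs = sum_list (map (\<lambda>c. norm (g *v (snd (snd c) - fst (snd c)))) cs)"

definition hat_dist_g :: "real^2^2 \<Rightarrow> sheet \<times> (real^2) \<Rightarrow> sheet \<times> (real^2) \<Rightarrow> real" where
  "hat_dist_g g x y = Inf (path_len_g g ` {cs. admissible cs x y})"

definition S_union :: "(real^2) set" where
  "S_union = (\<Union>n\<in>{1::nat..}. closed_segment (pt (4 * real n) 0) (pt (4 * real n + 1) 0))"

definition S'_union :: "(real^2) set" where
  "S'_union = (\<Union>n\<in>{1::nat..}. closed_segment (pt 0 (2 * real n)) (pt 1 (2 * real n)))"

end

theory Submission
  imports Defs
begin

text \<open>
  An admissible path from a point p of a mark in S to a point q of a mark in S' must leave E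
  through a glue mark at some point b, and enter E' for the last time at a point c of a glue mark.
  The parts of the path before the first and after the last crossing stay in one sheet, so the
  length is at least |g(b - p)| + |g(q - c)|. In E the vector b - p is horizontal of length at
  least 1, hence |g(b - p)| \<ge> |g e|; in E' the marks of S' lie at even heights and the glue marks
  at odd heights, so q - c has horizontal part at most 1 and vertical part at least 1, hence
  |g(q - c)| \<ge> |g f| - |g e|. The length is therefore at least max |g e| |g f|, and
  max |g e| |g f| \<ge> \<parallel>g\<parallel> / sqrt 2 \<ge> 1 / sqrt 2.
\<close>

lemma pt_nth [simp]: "pt a b $ 1 = a" "pt a b $ 2 = b"
  by (simp_all add: pt_def)

lemma closed_segment_nth:
  fixes a b :: "real^'n"
  assumes "w \<in> closed_segment a b"
  shows "w $ i \<in> closed_segment (a $ i) (b $ i)"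
proof -
  have "linear (\<lambda>x::real^'n. x $ i)"
    using bounded_linear_vec_nth by (rule bounded_linear.linear)
  then have "closed_segment (a $ i) (b $ i) = (\<lambda>x. x $ i) ` closed_segment a b"
    by (rule closed_segment_linear_image)
  then show ?thesis
    using assms by blast
qed

lemma open_segment_nth:
  fixes a b :: "real^'n"
  assumes "w \<in> open_segment a b" "a $ i \<noteq> b $ i"
  shows "w $ i \<in> open_segment (a $ i) (b $ i)"
proof -
  obtain u where "0 < u" "u < 1" "w = (1 - u) *\<^sub>R a + u *\<^sub>R b"
    using assms(1) by (auto simp: in_segment)
  then show ?thesis
    using assms(2) by (auto simp: in_segment)
qed

lemma glue_slit_height:
  assumes "w \<in> glue_slit s n"
  shows "w $ 2 = glue_height s n"
  using closed_segment_nth[OF assms[unfolded glue_slit_def], of 2]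
  by (cases s) (simp_all add: glue_start_def glue_end_def glue_height_def)

lemma glue_slit_SE_nth:
  assumes "w \<in> glue_slit SE n"
  shows "w $ 2 = 0" "4 * real n + 2 \<le> w $ 1" "w $ 1 \<le> 4 * real n + 3"
  using closed_segment_nth[OF assms[unfolded glue_slit_def], of 1]
    glue_slit_height[OF assms]
  by (simp_all add: glue_start_def glue_end_def glue_height_def closed_segment_eq_real_ivl)

lemma transfer_glue_slit_SE_nth:
  assumes "b \<in> glue_slit SE n"
  shows "transfer SE n b $ 2 = 2 * real n + 1" "0 \<le> transfer SE n b $ 1" "transfer SE n b $ 1 \<le> 1"
  using glue_slit_SE_nth[OF assms] by (simp_all add: transfer_def glue_start_def)

lemma S_unionE:
  assumes "p \<in> S_union"
  obtains n :: nat where "n \<ge> 1" "p $ 2 = 0" "4 * real n \<le> p $ 1" "p $ 1 \<le> 4 * real n + 1"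
proof -
  obtain n :: nat where "n \<ge> 1" and p: "p \<in> closed_segment (pt (4 * real n) 0) (pt (4 * real n + 1) 0)"
    using assms unfolding S_union_def by auto
  show ?thesis
    by (rule that[of n]) (use \<open>n \<ge> 1\<close> closed_segment_nth[OF p, of 1] closed_segment_nth[OF p, of 2] in
        \<open>simp_all add: closed_segment_eq_real_ivl\<close>)
qed

lemma S'_unionE:
  assumes "q \<in> S'_union"
  obtains m :: nat where "m \<ge> 1" "q $ 2 = 2 * real m" "0 \<le> q $ 1" "q $ 1 \<le> 1"
proof -
  obtain m :: nat where "m \<ge> 1" and q: "q \<in> closed_segment (pt 0 (2 * real m)) (pt 1 (2 * real m))"
    using assms unfolding S'_union_def by auto
  show ?thesis
    by (rule that[of m]) (use \<open>m \<ge> 1\<close> closed_segment_nth[OF q, of 1] closed_segment_nth[OF q, of 2] in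
        \<open>simp_all add: closed_segment_eq_real_ivl\<close>)
qed

lemma other_neq [simp]: "other s \<noteq> s" "s \<noteq> other s"
  by (cases s, simp_all)+

lemma link_same_sheet:
  assumes "link c c'" "fst c' = fst c"
  shows "fst (snd c') = snd (snd c)"
  using assms unfolding link_def Let_def by auto

lemma link_other_sheet:
  assumes "link c c'" "fst c' \<noteq> fst c"
  obtains n where "n \<ge> 1" "snd (snd c) \<in> glue_slit (fst c) n"
    "fst (snd c') = transfer (fst c) n (snd (snd c))"
proof -
  have "glue_start s n \<in> glue_slit s n" "glue_end s n \<in> glue_slit s n"
    "w \<in> glue_slit_open s n \<Longrightarrow> w \<in> glue_slit s n" for s n w
    unfolding glue_slit_def glue_slit_open_def using segment_open_subset_closed by auto
  then show ?thesis
    using assms that unfolding link_def Let_def by auto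
qed

lemma admissible_iff_successively:
  "admissible cs x y \<longleftrightarrow> cs \<noteq> [] \<and> (\<forall>c\<in>set cs. piece_ok c) \<and> successively link cs \<and>
     fst (hd cs) = fst x \<and> fst (snd (hd cs)) = snd x \<and>
     fst (last cs) = fst y \<and> snd (snd (last cs)) = snd y"
  unfolding admissible_def successively_conv_nth ..

lemma path_len_g_append: "path_len_g g (xs @ ys) = path_len_g g xs + path_len_g g ys"
  by (simp add: path_len_g_def)

lemma path_len_g_nonneg: "0 \<le> path_len_g g cs"
  unfolding path_len_g_def by (induction cs) auto

lemma path_len_g_ge_displacement:
  assumes "successively (\<lambda>c c'. fst (snd c') = snd (snd c)) cs" "cs \<noteq> []"
  shows "norm (g *v (snd (snd (last cs)) - fst (snd (hd cs)))) \<le> path_len_g g cs"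
  using assms
proof (induction cs rule: induct_list012)
  case (2 c)
  then show ?case by (simp add: path_len_g_def)
next
  case (3 c c' cs)
  let ?a = "fst (snd c)" and ?m = "snd (snd c)" and ?b = "snd (snd (last (c' # cs)))"
  have "g *v (?b - ?a) = g *v (?m - ?a) + g *v (?b - ?m)"
    by (simp add: matrix_vector_right_distrib[symmetric])
  then have "norm (g *v (?b - ?a)) \<le> norm (g *v (?m - ?a)) + norm (g *v (?b - ?m))"
    by (metis norm_triangle_ineq)
  with 3 show ?case
    by (simp add: path_len_g_def)
qed simp

lemma successively_first_exit:
  assumes "successively R cs" "cs \<noteq> []" "P (hd cs)" "\<not> P (last cs)"
  obtains ys zs where "cs = ys @ zs" "ys \<noteq> []" "zs \<noteq> []" "\<forall>c\<in>set ys. P c"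
    "R (last ys) (hd zs)" "\<not> P (hd zs)"
proof -
  obtain ys z zs where cs: "cs = ys @ z # zs" "\<not> P z" "\<forall>c\<in>set ys. P c"
    using split_list_first_prop[of cs "\<lambda>c. \<not> P c"] assms(2,4) last_in_set by blast
  with assms(3) have "ys \<noteq> []" by auto
  with assms(1) cs show ?thesis
    by (intro that[of ys "z # zs"]) (auto simp: successively_append_iff)
qed

lemma successively_last_entry:
  assumes "successively R cs" "cs \<noteq> []" "\<not> P (hd cs)" "P (last cs)"
  obtains ys zs where "cs = ys @ zs" "ys \<noteq> []" "zs \<noteq> []" "\<forall>c\<in>set zs. P c"
    "R (last ys) (hd zs)" "\<not> P (last ys)"
proof -
  obtain ys y zs where cs: "cs = ys @ y # zs" "\<not> P y" "\<forall>c\<in>set zs. P c"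
    using split_list_last_prop[of cs "\<lambda>c. \<not> P c"] assms(2,3) hd_in_set by blast
  with assms(4) have "zs \<noteq> []" by auto
  with assms(1) cs show ?thesis
    by (intro that[of "ys @ [y]" zs]) (auto simp: successively_append_iff successively_Cons)
qed

lemma append_eq_append_separated:
  assumes "ys @ zs = us @ vs" "\<forall>c\<in>set ys. P c" "\<forall>c\<in>set vs. \<not> P c"
  obtains w where "ys @ zs = ys @ w @ vs"
proof -
  consider w where "ys = us @ w" "w @ zs = vs" | w where "ys @ w = us" "zs = w @ vs"
    using assms(1) by (auto simp: append_eq_append_conv2)
  then show ?thesis
  proof cases
    case (1 w)
    with assms(2,3) have "w = []" by (cases w) auto
    with 1 show ?thesis by (intro that[of "[]"]) simp
  next
    case (2 w)
    then show ?thesis by (intro that[of w]) simp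
  qed
qed

lemma sheet_run_length_ge_displacement:
  assumes "successively link cs" "cs \<noteq> []" "\<forall>c\<in>set cs. fst c = s"
  shows "norm (g *v (snd (snd (last cs)) - fst (snd (hd cs)))) \<le> path_len_g g cs"
proof (rule path_len_g_ge_displacement)
  show "successively (\<lambda>c c'. fst (snd c') = snd (snd c)) cs"
    using assms(1) by (rule successively_mono) (use assms(3) link_same_sheet in auto)
qed (rule assms(2))

lemma admissible_crossings:
  assumes "admissible cs (SE, p) (SE', q)"
  obtains n b k b' where "n \<ge> 1" "b \<in> glue_slit SE n" "k \<ge> 1" "b' \<in> glue_slit SE k"
    "norm (g *v (b - p)) + norm (g *v (q - transfer SE k b')) \<le> path_len_g g cs"
proof -
  have cs: "successively link cs" "cs \<noteq> []" "fst (hd cs) = SE" "fst (snd (hd cs)) = p"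
    "fst (last cs) = SE'" "snd (snd (last cs)) = q"
    using assms by (simp_all add: admissible_iff_successively)
  obtain ys zs where ys: "cs = ys @ zs" "ys \<noteq> []" "zs \<noteq> []" "\<forall>c\<in>set ys. fst c = SE"
    "link (last ys) (hd zs)" "fst (hd zs) \<noteq> SE"
    by (rule successively_first_exit[OF cs(1,2), where P = "\<lambda>c. fst c = SE"]) (simp_all add: cs)
  obtain us vs where vs: "cs = us @ vs" "us \<noteq> []" "vs \<noteq> []" "\<forall>c\<in>set vs. fst c = SE'"
    "link (last us) (hd vs)" "fst (last us) \<noteq> SE'"
    by (rule successively_last_entry[OF cs(1,2), where P = "\<lambda>c. fst c = SE'"]) (simp_all add: cs)
  have sheets: "fst (last ys) = SE" "fst (last us) = SE" "fst (hd vs) = SE'"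
    using ys(2,4) vs(3,4,6) by (simp_all, cases "fst (last us)", simp_all)
  obtain n where n: "n \<ge> 1" "snd (snd (last ys)) \<in> glue_slit SE n"
    using link_other_sheet[OF ys(5)] ys(6) sheets(1) by metis
  obtain k where k: "k \<ge> 1" "snd (snd (last us)) \<in> glue_slit SE k"
    "fst (snd (hd vs)) = transfer SE k (snd (snd (last us)))"
    using link_other_sheet[OF vs(5)] sheets(2,3) by (metis sheet.distinct(1))
  have "ys @ zs = us @ vs" "\<forall>c\<in>set vs. fst c \<noteq> SE"
    using ys(1) vs(1,4) by auto
  then obtain w where w: "cs = ys @ w @ vs"
    using append_eq_append_separated[of ys zs us vs "\<lambda>c. fst c = SE"] ys(1,4) by metis
  have ys_run: "successively link ys" and vs_run: "successively link vs"
    using cs(1) w by (auto simp: successively_append_iff)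
  have "hd ys = hd cs" "last vs = last cs"
    using w ys(2) vs(3) by simp_all
  then have "norm (g *v (snd (snd (last ys)) - p)) \<le> path_len_g g ys"
    "norm (g *v (q - transfer SE k (snd (snd (last us))))) \<le> path_len_g g vs"
    using sheet_run_length_ge_displacement[OF ys_run ys(2,4), of g]
      sheet_run_length_ge_displacement[OF vs_run vs(3,4), of g] cs(4,6) k(3) by simp_all
  moreover have "path_len_g g cs = path_len_g g ys + path_len_g g w + path_len_g g vs"
    using w by (simp add: path_len_g_append)
  ultimately show ?thesis
    using that[OF n k(1,2)] path_len_g_nonneg[of g w] by linarith
qed

lemma matrix_vector_mult_pt_basis:
  "g *v w = (w $ 1) *\<^sub>R (g *v pt 1 0) + (w $ 2) *\<^sub>R (g *v pt 0 1)"
proof -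
  have "w = (w $ 1) *\<^sub>R pt 1 0 + (w $ 2) *\<^sub>R pt 0 1"
    by (simp add: vec_eq_iff forall_2)
  then show ?thesis
    by (metis matrix_vector_right_distrib matrix_vector_mult_scaleR)
qed

lemma norm_pt: "norm (pt a b) = sqrt (a\<^sup>2 + b\<^sup>2)"
  by (simp add: norm_vec_def L2_set_def sum_2)

lemma inner_pt: "pt a b \<bullet> pt c d = a * c + b * d"
  by (simp add: inner_vec_def sum_2)

lemma onorm_le_sqrt_column_norms:
  "onorm (\<lambda>x. g *v x) \<le> sqrt ((norm (g *v pt 1 0))\<^sup>2 + (norm (g *v pt 0 1))\<^sup>2)"
proof (rule onorm_le)
  fix x :: "real^2"
  let ?A = "norm (g *v pt 1 0)" and ?B = "norm (g *v pt 0 1)"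
  have "norm (g *v x) \<le> \<bar>x $ 1\<bar> * ?A + \<bar>x $ 2\<bar> * ?B"
    using norm_triangle_ineq[of "(x $ 1) *\<^sub>R (g *v pt 1 0)" "(x $ 2) *\<^sub>R (g *v pt 0 1)"]
    by (simp add: matrix_vector_mult_pt_basis[of g x])
  also have "\<dots> = pt \<bar>x $ 1\<bar> \<bar>x $ 2\<bar> \<bullet> pt ?A ?B"
    by (simp add: inner_pt)
  also have "\<dots> \<le> norm (pt \<bar>x $ 1\<bar> \<bar>x $ 2\<bar>) * norm (pt ?A ?B)"
    by (rule norm_cauchy_schwarz)
  also have "norm (pt \<bar>x $ 1\<bar> \<bar>x $ 2\<bar>) = norm x"
    by (simp add: norm_pt norm_vec_def L2_set_def sum_2)
  finally show "norm (g *v x) \<le> sqrt (?A\<^sup>2 + ?B\<^sup>2) * norm x"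
    by (simp add: norm_pt mult.commute)
qed

lemma sqrt_sum_squares_le_sqrt2_max: "sqrt (a\<^sup>2 + b\<^sup>2) \<le> sqrt 2 * max \<bar>a\<bar> \<bar>b\<bar>"
proof -
  have "a\<^sup>2 + b\<^sup>2 \<le> 2 * (max \<bar>a\<bar> \<bar>b\<bar>)\<^sup>2"
    by (cases "\<bar>a\<bar> \<le> \<bar>b\<bar>") (auto simp: max_def abs_le_square_iff)
  then show ?thesis
    by (metis real_sqrt_le_mono real_sqrt_mult real_sqrt_abs abs_of_nonneg abs_ge_zero max.coboundedI1)
qed

lemma norm_horizontal_ge:
  assumes "w $ 2 = 0" "1 \<le> \<bar>w $ 1\<bar>"
  shows "norm (g *v pt 1 0) \<le> norm (g *v w)"
proof -
  have "norm (g *v w) = \<bar>w $ 1\<bar> * norm (g *v pt 1 0)"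
    using assms(1) by (simp add: matrix_vector_mult_pt_basis[of g w])
  then show ?thesis
    using assms(2) by (simp add: mult_le_cancel_right1)
qed

lemma norm_steep_ge:
  assumes "\<bar>w $ 1\<bar> \<le> 1" "1 \<le> \<bar>w $ 2\<bar>"
  shows "norm (g *v pt 0 1) - norm (g *v pt 1 0) \<le> norm (g *v w)"
proof -
  let ?A = "norm (g *v pt 1 0)" and ?B = "norm (g *v pt 0 1)"
  have "\<bar>w $ 2\<bar> * ?B \<le> norm (g *v w) + \<bar>w $ 1\<bar> * ?A"
    using norm_triangle_ineq4[of "g *v w" "(w $ 1) *\<^sub>R (g *v pt 1 0)"]
    by (simp add: matrix_vector_mult_pt_basis[of g w])
  moreover have "?B \<le> \<bar>w $ 2\<bar> * ?B" "\<bar>w $ 1\<bar> * ?A \<le> ?A"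
    using assms by (simp_all add: mult_le_cancel_right1 mult_left_le_one_le)
  ultimately show ?thesis by linarith
qed

lemma glue_slit_SE_far_from_S:
  assumes "b \<in> glue_slit SE n" "p \<in> S_union"
  shows "(b - p) $ 2 = 0" "1 \<le> \<bar>(b - p) $ 1\<bar>"
proof -
  obtain m :: nat where p: "p $ 2 = 0" "4 * real m \<le> p $ 1" "p $ 1 \<le> 4 * real m + 1"
    using S_unionE[OF assms(2)] by metis
  note b = glue_slit_SE_nth[OF assms(1)]
  show "(b - p) $ 2 = 0"
    using b p by simp
  consider "real m \<le> real n" | "real n + 1 \<le> real m"
    by (metis not_less_eq_eq of_nat_Suc of_nat_le_iff add.commute)
  then show "1 \<le> \<bar>(b - p) $ 1\<bar>"
    by cases (use b p in auto)
qed

lemma transfer_far_from_S':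
  assumes "b \<in> glue_slit SE k" "q \<in> S'_union"
  shows "\<bar>(q - transfer SE k b) $ 1\<bar> \<le> 1" "1 \<le> \<bar>(q - transfer SE k b) $ 2\<bar>"
proof -
  obtain m :: nat where q: "q $ 2 = 2 * real m" "0 \<le> q $ 1" "q $ 1 \<le> 1"
    using S'_unionE[OF assms(2)] by metis
  note c = transfer_glue_slit_SE_nth[OF assms(1)]
  show "\<bar>(q - transfer SE k b) $ 1\<bar> \<le> 1"
    using c q by simp
  consider "real k + 1 \<le> real m" | "real m \<le> real k"
    by (metis not_less_eq_eq of_nat_Suc of_nat_le_iff add.commute)
  then show "1 \<le> \<bar>(q - transfer SE k b) $ 2\<bar>"
    by cases (use c q in auto)
qed

lemma admissible_path_len_g_ge:
  assumes "1 \<le> onorm (\<lambda>x. g *v x)" "admissible cs (SE, p) (SE', q)" "p \<in> S_union" "q \<in> S'_union"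
  shows "1 / sqrt 2 \<le> path_len_g g cs"
proof -
  let ?A = "norm (g *v pt 1 0)" and ?B = "norm (g *v pt 0 1)"
  obtain n b k b' where "b \<in> glue_slit SE n" "b' \<in> glue_slit SE k"
    and len: "norm (g *v (b - p)) + norm (g *v (q - transfer SE k b')) \<le> path_len_g g cs"
    using admissible_crossings[OF assms(2)] by metis
  with assms(3,4) have "?A \<le> norm (g *v (b - p))" "?B - ?A \<le> norm (g *v (q - transfer SE k b'))"
    by (metis norm_horizontal_ge glue_slit_SE_far_from_S, metis norm_steep_ge transfer_far_from_S')
  with len have "max ?A ?B \<le> path_len_g g cs"
    by (smt (verit) norm_ge_zero)
  moreover have "1 \<le> sqrt 2 * max ?A ?B"
    using assms(1) onorm_le_sqrt_column_norms[of g] sqrt_sum_squares_le_sqrt2_max[of ?A ?B] by simp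
  ultimately have "1 \<le> sqrt 2 * path_len_g g cs"
    by (smt (verit) mult_left_mono real_sqrt_ge_zero)
  then show ?thesis
    by (simp add: field_simps)
qed

lemma piece_ok_of_heights:
  assumes "a $ 2 \<noteq> b $ 2" "\<And>n. n \<ge> 1 \<Longrightarrow> glue_height s n \<notin> open_segment (a $ 2) (b $ 2)"
  shows "piece_ok (s, a, b)"
proof -
  have "u \<notin> glue_slit s n" if "u \<in> open_segment a b" "n \<ge> 1" for u n
    using open_segment_nth[OF that(1) assms(1)] glue_slit_height assms(2)[OF that(2)] by metis
  moreover have "a \<noteq> b"
    using assms(1) by auto
  ultimately show ?thesis
    unfolding piece_ok_def Let_def by auto
qed

lemma admissible_path_exists:
  assumes "p \<in> S_union" "q \<in> S'_union"
  shows "\<exists>cs. admissible cs (SE, p) (SE', q)"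
proof -
  have p: "p $ 2 = 0"
    using S_unionE[OF assms(1)] by metis
  obtain m :: nat where "m \<ge> 1" and q: "q $ 2 = 2 * real m"
    using S'_unionE[OF assms(2)] by metis
  define x where "x = p $ 1"
  define c1 :: piece where "c1 = (SE, p, pt x (-1))"
  define c2 :: piece where "c2 = (SE, pt x (-1), glue_start SE m)"
  define c3 :: piece where "c3 = (SE', glue_start SE' m, q)"
  have "piece_ok c1" "piece_ok c2" "piece_ok c3"
    unfolding c1_def c2_def c3_def
    by (rule piece_ok_of_heights;
        simp add: p q glue_start_def glue_height_def open_segment_eq_real_ivl; linarith)+
  moreover have "link c1 c2"
    using glue_slit_height[of "pt x (-1)" SE]
    unfolding link_def Let_def c1_def c2_def by (auto simp: glue_height_def)
  moreover have "link c2 c3"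
    using \<open>m \<ge> 1\<close> unfolding link_def Let_def c2_def c3_def
    by (auto simp: transfer_def)
  ultimately have "admissible [c1, c2, c3] (SE, p) (SE', q)"
    by (simp add: admissible_iff_successively c1_def c3_def)
  then show ?thesis ..
qed

theorem lemma4p5:
  fixes g :: "real^2^2"
  assumes "det g > 0"
    and "onorm (\<lambda>x. g *v x) \<ge> 1"
  shows "Inf {hat_dist_g g (SE, p) (SE', q) | p q. p \<in> S_union \<and> q \<in> S'_union} \<ge> 1 / sqrt 2"
proof (rule cInf_greatest)
  have "pt 4 0 \<in> S_union" "pt 0 2 \<in> S'_union"
    unfolding S_union_def S'_union_def by (auto intro!: bexI[of _ 1])
  then show "{hat_dist_g g (SE, p) (SE', q) | p q. p \<in> S_union \<and> q \<in> S'_union} \<noteq> {}"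
    by blast
next
  fix d
  assume "d \<in> {hat_dist_g g (SE, p) (SE', q) | p q. p \<in> S_union \<and> q \<in> S'_union}"
  then obtain p q where d: "d = hat_dist_g g (SE, p) (SE', q)" and pq: "p \<in> S_union" "q \<in> S'_union"
    by blast
  show "1 / sqrt 2 \<le> d"
    unfolding d hat_dist_g_def
    using admissible_path_exists[OF pq] admissible_path_len_g_ge[OF assms(2) _ pq]
    by (auto intro!: cInf_greatest)
qed

end
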